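(* Let $Z_{G,\epsilon}=x(x-\epsilon)\partial_x+\chi(u_1u_2,x,\epsilon)(u_1\partial_{u_1}-u_2\partial_{u_2})$. A germ of vector field $\xi$ in the $(u,x)$-space (depending on $\epsilon$) is a vertical infinitesimal symplectic symmetry of $Z_{G,\epsilon}$, i.e. satisfies (i) $\xi\cdot x=0$, (ii) $\mathcal L_\xi(du_1\wedge du_2)=0$, (iii) $[\xi,Z_{G,\epsilon}]=0$, if and only if $\xi=X_{f,x,\epsilon}:=\frac{\partial f}{\partial u_2}\partial_{u_1}-\frac{\partial f}{\partial u_1}\partial_{u_2}$ is the Hamiltonian vector field of some function $f(u,x,\epsilon)$ which is a first integral of $Z_{G,\epsilon}$, i.e. $Z_{G,\epsilon}\cdot f=0$.
   Context: $\chi(h,x,\epsilon)=\chi^{(0)}(h,\epsilon)+x\chi^{(1)}(h,\epsilon)$ is an analytic germ, affine in $x$, with $\chi(0,0,0)\ne0$; $Z_{G,\epsilon}$ is the model (formal normal form) vector field, Hamiltonian with respect to $G(h,x,\epsilon)=\int_0^h\chi(s,x,\epsilon)\,ds$ in the fibers $x=\mathrm{const}$. *)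

theory Defs
  imports "HOL-Analysis.Analysis"
begin

text \<open>Holomorphic functions of several complex variables on an open set, defined
  (Osgood) as continuous and holomorphic in each variable separately.\<close>

definition hol2 :: "(complex \<times> complex) set \<Rightarrow> (complex \<Rightarrow> complex \<Rightarrow> complex) \<Rightarrow> bool" where
  "hol2 S g \<longleftrightarrow> open S \<and> continuous_on S (\<lambda>(a, b). g a b) \<and>
     (\<forall>(a, b) \<in> S. (\<lambda>v. g v b) field_differentiable at a \<and> (\<lambda>v. g a v) field_differentiable at b)"

type_synonym pt4 = "complex \<times> complex \<times> complex \<times> complex"
type_synonym fun4 = "complex \<Rightarrow> complex \<Rightarrow> complex \<Rightarrow> complex \<Rightarrow> complex"

text \<open>Functions of \<open>(u1, u2, x, \<epsilon>)\<close>.\<close>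
definition hol4 :: "pt4 set \<Rightarrow> fun4 \<Rightarrow> bool" where
  "hol4 S f \<longleftrightarrow> open S \<and> continuous_on S (\<lambda>(a, b, c, d). f a b c d) \<and>
     (\<forall>(a, b, c, d) \<in> S.
        (\<lambda>v. f v b c d) field_differentiable at a \<and>
        (\<lambda>v. f a v c d) field_differentiable at b \<and>
        (\<lambda>v. f a b v d) field_differentiable at c \<and>
        (\<lambda>v. f a b c v) field_differentiable at d)"

definition pd_u1 :: "fun4 \<Rightarrow> fun4" where
  "pd_u1 f a b c d = deriv (\<lambda>v. f v b c d) a"
definition pd_u2 :: "fun4 \<Rightarrow> fun4" where
  "pd_u2 f a b c d = deriv (\<lambda>v. f a v c d) b"
definition pd_x :: "fun4 \<Rightarrow> fun4" where
  "pd_x f a b c d = deriv (\<lambda>v. f a b v d) c"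

definition vf_apply :: "fun4 \<Rightarrow> fun4 \<Rightarrow> fun4 \<Rightarrow> fun4 \<Rightarrow> fun4" where
  "vf_apply A B C f a b c d =
     A a b c d * pd_u1 f a b c d + B a b c d * pd_u2 f a b c d + C a b c d * pd_x f a b c d"

definition chi :: "(complex \<Rightarrow> complex \<Rightarrow> complex) \<Rightarrow> (complex \<Rightarrow> complex \<Rightarrow> complex)
     \<Rightarrow> complex \<Rightarrow> complex \<Rightarrow> complex \<Rightarrow> complex" where
  "chi \<chi>0 \<chi>1 h x e = \<chi>0 h e + x * \<chi>1 h e"

definition Z_u1 :: "(complex \<Rightarrow> complex \<Rightarrow> complex) \<Rightarrow> (complex \<Rightarrow> complex \<Rightarrow> complex) \<Rightarrow> fun4" where
  "Z_u1 \<chi>0 \<chi>1 u1 u2 x e = chi \<chi>0 \<chi>1 (u1 * u2) x e * u1"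
definition Z_u2 :: "(complex \<Rightarrow> complex \<Rightarrow> complex) \<Rightarrow> (complex \<Rightarrow> complex \<Rightarrow> complex) \<Rightarrow> fun4" where
  "Z_u2 \<chi>0 \<chi>1 u1 u2 x e = - (chi \<chi>0 \<chi>1 (u1 * u2) x e * u2)"
definition Z_x :: fun4 where
  "Z_x u1 u2 x e = x * (x - e)"

text \<open>Vertical infinitesimal symplectic symmetry of \<open>Z_{G,\<epsilon>}\<close> at a point, for
  \<open>\<xi> = A \<partial>_{u1} + B \<partial>_{u2} + C \<partial>_x\<close>:
  (i) \<open>\<xi>\<cdot>x = 0\<close>; (ii) \<open>\<L>_\<xi>(du1\<and>du2) = 0\<close> on the fibres \<open>x = const\<close>, i.e.
  \<open>\<partial>A/\<partial>u1 + \<partial>B/\<partial>u2 = 0\<close>; (iii) \<open>[\<xi>, Z] = 0\<close> componentwise.\<close>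
definition vert_sympl_symm_at ::
  "(complex \<Rightarrow> complex \<Rightarrow> complex) \<Rightarrow> (complex \<Rightarrow> complex \<Rightarrow> complex) \<Rightarrow> fun4 \<Rightarrow> fun4 \<Rightarrow> fun4 \<Rightarrow> pt4 \<Rightarrow> bool" where
  "vert_sympl_symm_at \<chi>0 \<chi>1 A B C p = (case p of (a, b, c, d) \<Rightarrow>
     C a b c d = 0 \<and>
     pd_u1 A a b c d + pd_u2 B a b c d = 0 \<and>
     vf_apply A B C (Z_u1 \<chi>0 \<chi>1) a b c d - vf_apply (Z_u1 \<chi>0 \<chi>1) (Z_u2 \<chi>0 \<chi>1) Z_x A a b c d = 0 \<and>
     vf_apply A B C (Z_u2 \<chi>0 \<chi>1) a b c d - vf_apply (Z_u1 \<chi>0 \<chi>1) (Z_u2 \<chi>0 \<chi>1) Z_x B a b c d = 0 \<and>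
     vf_apply A B C Z_x a b c d - vf_apply (Z_u1 \<chi>0 \<chi>1) (Z_u2 \<chi>0 \<chi>1) Z_x C a b c d = 0)"

end

theory Submission
  imports Defs "HOL-Complex_Analysis.Complex_Analysis"
begin

(* Condition (ii) says that the 1-form A du2 - B du1 is closed on every fibre, so on a polydisc
   xi = X_f with f(u1, u2) = int_0^u2 A(u1, t) dt - int_0^u1 B(s, 0) ds.  The field Z preserves
   du1 ^ du2 on the fibres and its x-component does not depend on u; hence the u-components of
   [xi, Z] = 0 say that Z_x dA/dx and Z_x dB/dx are u-derivatives of Z_u1 B - Z_u2 A, and integrating
   along the same path gives Z.f = 0, since Z_u2 vanishes on u2 = 0 and Z_u1 at u = 0.
   Conversely, for xi = X_f condition (ii) is the symmetry of mixed partials and (iii) follows by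
   differentiating Z.f = 0 in u1 and u2.  Mixed partials of separately holomorphic continuous
   functions commute, by Cauchy's integral formula with parameters. *)

section \<open>Cauchy's integral formula with parameters\<close>

(* gamma'(t) / (2 pi i (gamma(t) - z)^2) for gamma = circlepath c R, the integrand of Cauchy's formula for g'(z). *)
definition circle_deriv_kernel :: "complex \<Rightarrow> real \<Rightarrow> complex \<Rightarrow> real \<Rightarrow> complex" where
  "circle_deriv_kernel c R z t = of_real R * exp (2 * of_real pi * \<i> * of_real t) / (circlepath c R t - z)\<^sup>2"

lemma has_field_derivative_circle_integral:
  assumes "continuous_on (cball c R) g" "g holomorphic_on ball c R" "z \<in> ball c R"
  shows "(g has_field_derivative
           integral {0..1} (\<lambda>t. g (circlepath c R t) * circle_deriv_kernel c R z t)) (at z)"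
proof -
  have "(g has_field_derivative
      1 / (2 * of_real pi * \<i>) * contour_integral (circlepath c R) (\<lambda>u. g u / (u - z)\<^sup>2)) (at z)"
    by (rule Cauchy_derivative_integral_circlepath(2)[OF assms])
  also have "1 / (2 * of_real pi * \<i>) * contour_integral (circlepath c R) (\<lambda>u. g u / (u - z)\<^sup>2)
     = integral {0..1} (\<lambda>t. g (circlepath c R t) * circle_deriv_kernel c R z t)"
    unfolding contour_integral_integral vector_derivative_circlepath circle_deriv_kernel_def
    by (simp flip: integral_mult_left integral_mult_right add: field_simps)
  finally show ?thesis .
qed

lemma dist_circlepath: "dist c (circlepath c R t) = \<bar>R\<bar>"
  unfolding circlepath by (simp add: dist_norm norm_mult)

lemma circlepath_minus_ne_zero:
  assumes "z \<in> ball c R" shows "circlepath c R t - z \<noteq> 0"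
  using assms dist_circlepath[of c R t] by auto

lemma continuous_on_circle_deriv_kernel:
  "continuous_on (ball c R \<times> UNIV) (\<lambda>(z, t). circle_deriv_kernel c R z t)"
  unfolding circle_deriv_kernel_def split_beta
proof (intro continuous_intros)
  show "continuous_on (ball c R \<times> UNIV) (\<lambda>x. circlepath c R (snd x))"
    unfolding circlepath by (intro continuous_intros)
qed (auto dest: circlepath_minus_ne_zero)

lemma continuous_on_circle_integral:
  fixes F :: "'a::topological_space \<Rightarrow> complex \<Rightarrow> complex"
  assumes R: "R > 0" and cont: "continuous_on (X \<times> cball c R) (\<lambda>(x, u). F x u)"
  shows "continuous_on (X \<times> ball c R)
           (\<lambda>(x, z). integral {0..1} (\<lambda>t. F x (circlepath c R t) * circle_deriv_kernel c R z t))"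
proof -
  have "continuous_on ((X \<times> ball c R) \<times> cbox 0 1) (\<lambda>y. (\<lambda>(x, u). F x u) (fst (fst y), circlepath c R (snd y)))"
  proof (rule continuous_on_compose2[OF cont])
    show "continuous_on ((X \<times> ball c R) \<times> cbox 0 1) (\<lambda>y. (fst (fst y), circlepath c R (snd y)))"
      unfolding circlepath by (intro continuous_intros)
    show "(\<lambda>y. (fst (fst y), circlepath c R (snd y))) ` ((X \<times> ball c R) \<times> cbox 0 1) \<subseteq> X \<times> cball c R"
      using dist_circlepath[of c R] R by (auto simp: mem_Times_iff)
  qed
  moreover have "continuous_on ((X \<times> ball c R) \<times> cbox 0 1)
      (\<lambda>y. (\<lambda>(z, t). circle_deriv_kernel c R z t) (snd (fst y), snd y))"
    by (rule continuous_on_compose2[OF continuous_on_circle_deriv_kernel]) (auto intro!: continuous_intros)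
  ultimately have "continuous_on ((X \<times> ball c R) \<times> cbox 0 1)
      (\<lambda>(x, t). F (fst x) (circlepath c R t) * circle_deriv_kernel c R (snd x) t)"
    unfolding split_beta by (intro continuous_on_mult) simp_all
  from integral_continuous_on_param[OF this] show ?thesis
    by (simp add: split_beta cbox_interval)
qed

lemma continuous_on_deriv_param:
  fixes G :: "'p::metric_space \<Rightarrow> complex \<Rightarrow> complex"
  assumes Om: "open Om" and cont: "continuous_on Om (\<lambda>(p, z). G p z)"
    and diff: "\<And>p z. (p, z) \<in> Om \<Longrightarrow> G p field_differentiable at z"
  shows "continuous_on Om (\<lambda>(p, z). deriv (G p) z)"
proof -
  have "isCont (\<lambda>(p, z). deriv (G p) z) (p0, z0)" if p0z0: "(p0, z0) \<in> Om" for p0 z0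
  proof -
    obtain A B where AB: "open A" "open B" "(p0, z0) \<in> A \<times> B" "A \<times> B \<subseteq> Om"
      using open_prod_elim[OF Om p0z0] by metis
    obtain R where R: "R > 0" "cball z0 R \<subseteq> B"
      using open_contains_cball AB by force
    have sub: "A \<times> cball z0 R \<subseteq> Om" using AB(4) R(2) by blast
    have cauchy: "deriv (G p) z = integral {0..1} (\<lambda>t. G p (circlepath z0 R t) * circle_deriv_kernel z0 R z t)"
      if "p \<in> A" "z \<in> ball z0 R" for p z
    proof -
      have "(p, u) \<in> Om" if "u \<in> cball z0 R" for u
        using sub \<open>p \<in> A\<close> that by blast
      then have "G p holomorphic_on cball z0 R"
        using diff by (auto simp: holomorphic_on_def intro: field_differentiable_at_within)
      then show ?thesis
        using that by (intro DERIV_imp_deriv has_field_derivative_circle_integral)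
          (auto intro: holomorphic_on_imp_continuous_on holomorphic_on_subset)
    qed
    have "continuous_on (A \<times> ball z0 R)
        (\<lambda>(p, z). integral {0..1} (\<lambda>t. G p (circlepath z0 R t) * circle_deriv_kernel z0 R z t))"
      by (rule continuous_on_circle_integral[OF R(1) continuous_on_subset[OF cont sub]])
    then have "continuous_on (A \<times> ball z0 R) (\<lambda>(p, z). deriv (G p) z)"
      by (rule continuous_on_eq) (auto simp: cauchy)
    moreover have "open (A \<times> ball z0 R)" "(p0, z0) \<in> A \<times> ball z0 R"
      using AB R by (auto simp: open_Times)
    ultimately show ?thesis
      using continuous_on_eq_continuous_at by blast
  qed
  then show ?thesis
    by (auto intro: continuous_at_imp_continuous_on)
qed

lemma open_contains_cball_pair:
  fixes Om :: "('p::metric_space \<times> complex \<times> complex) set"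
  assumes "open Om" "(p, z, w) \<in> Om"
  obtains \<rho> where "\<rho> > 0" "\<And>\<zeta> w'. \<zeta> \<in> cball z \<rho> \<Longrightarrow> w' \<in> cball w \<rho> \<Longrightarrow> (p, \<zeta>, w') \<in> Om"
proof -
  obtain A B where AB: "open A" "open B" "(p, z, w) \<in> A \<times> B" "A \<times> B \<subseteq> Om"
    using open_prod_elim[OF assms] by metis
  obtain B1 B2 where B: "open B1" "open B2" "(z, w) \<in> B1 \<times> B2" "B1 \<times> B2 \<subseteq> B"
    using open_prod_elim[OF AB(2)] AB(3) by (metis mem_Sigma_iff)
  obtain r1 where r1: "r1 > 0" "cball z r1 \<subseteq> B1" using open_contains_cball B by force
  obtain r2 where r2: "r2 > 0" "cball w r2 \<subseteq> B2" using open_contains_cball B by force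
  show ?thesis
  proof (rule that[of "min r1 r2"])
    fix \<zeta> w' assume "\<zeta> \<in> cball z (min r1 r2)" "w' \<in> cball w (min r1 r2)"
    then have "\<zeta> \<in> B1" "w' \<in> B2" using r1 r2 by auto
    then show "(p, \<zeta>, w') \<in> Om" using B AB by blast
  qed (use r1 r2 in auto)
qed

lemma has_field_derivative_circle_integral_param:
  fixes H H' :: "complex \<Rightarrow> complex \<Rightarrow> complex"
  assumes radii: "\<rho> > 0" "R > 0"
    and diff: "\<And>\<zeta> u. \<zeta> \<in> ball z \<rho> \<Longrightarrow> u \<in> cball w R \<Longrightarrow> ((\<lambda>\<zeta>. H \<zeta> u) has_field_derivative H' \<zeta> u) (at \<zeta>)"
    and cont: "continuous_on (ball z \<rho> \<times> cball w R) (\<lambda>(\<zeta>, u). H \<zeta> u)"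
    and cont': "continuous_on (ball z \<rho> \<times> cball w R) (\<lambda>(\<zeta>, u). H' \<zeta> u)"
  shows "((\<lambda>\<zeta>. integral {0..1} (\<lambda>t. H \<zeta> (circlepath w R t) * circle_deriv_kernel w R w t)) has_field_derivative
           integral {0..1} (\<lambda>t. H' z (circlepath w R t) * circle_deriv_kernel w R w t)) (at z)"
proof -
  have circle: "circlepath w R t \<in> cball w R" for t
    using dist_circlepath[of w R t] radii by simp
  have kernel: "continuous_on X (\<lambda>x. circle_deriv_kernel w R w (g x))"
    if "continuous_on X g" for X and g :: "_ \<Rightarrow> real"
  proof -
    have "continuous_on X (\<lambda>x. (w, g x))" using that by (intro continuous_intros)
    moreover have "(\<lambda>x. (w, g x)) ` X \<subseteq> ball w R \<times> UNIV" using radii by auto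
    ultimately have "continuous_on X (\<lambda>x. (\<lambda>(z, t). circle_deriv_kernel w R z t) (w, g x))"
      by (rule continuous_on_compose2[OF continuous_on_circle_deriv_kernel])
    then show ?thesis by simp
  qed
  have along_circle: "continuous_on (ball z \<rho> \<times> cbox 0 1) (\<lambda>(\<zeta>, t). F \<zeta> (circlepath w R t))"
    if "continuous_on (ball z \<rho> \<times> cball w R) (\<lambda>(\<zeta>, u). F \<zeta> u)" for F
  proof -
    have "continuous_on (ball z \<rho> \<times> cbox 0 1) (\<lambda>y. (fst y, circlepath w R (snd y)))"
      unfolding circlepath by (intro continuous_intros)
    moreover have "(\<lambda>y. (fst y, circlepath w R (snd y))) ` (ball z \<rho> \<times> cbox 0 1) \<subseteq> ball z \<rho> \<times> cball w R"
      using circle by auto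
    ultimately have "continuous_on (ball z \<rho> \<times> cbox 0 1) (\<lambda>y. (\<lambda>(\<zeta>, u). F \<zeta> u) (fst y, circlepath w R (snd y)))"
      by (rule continuous_on_compose2[OF that])
    then show ?thesis by (simp add: split_beta)
  qed
  have "((\<lambda>\<zeta>. integral (cbox 0 1) (\<lambda>t. H \<zeta> (circlepath w R t) * circle_deriv_kernel w R w t)) has_field_derivative
       integral (cbox 0 1) (\<lambda>t. H' z (circlepath w R t) * circle_deriv_kernel w R w t)) (at z within ball z \<rho>)"
  proof (rule leibniz_rule_field_derivative[where f="\<lambda>\<zeta> t. H \<zeta> (circlepath w R t) * circle_deriv_kernel w R w t"
        and fx="\<lambda>\<zeta> t. H' \<zeta> (circlepath w R t) * circle_deriv_kernel w R w t"])
    fix \<zeta> t assume "\<zeta> \<in> ball z \<rho>"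
    then show "((\<lambda>\<zeta>. H \<zeta> (circlepath w R t) * circle_deriv_kernel w R w t) has_field_derivative
        H' \<zeta> (circlepath w R t) * circle_deriv_kernel w R w t) (at \<zeta> within ball z \<rho>)"
      using circle by (intro has_field_derivative_at_within[OF DERIV_cmult_right] diff) auto
  next
    fix \<zeta> assume "\<zeta> \<in> ball z \<rho>"
    then have "(\<lambda>t. (\<zeta>, t)) ` cbox 0 1 \<subseteq> ball z \<rho> \<times> cbox 0 1" by auto
    from continuous_on_compose2[OF along_circle[OF cont] _ this]
    have "continuous_on (cbox 0 1) (\<lambda>t. H \<zeta> (circlepath w R t))"
      by (simp add: continuous_on_Pair)
    then show "(\<lambda>t. H \<zeta> (circlepath w R t) * circle_deriv_kernel w R w t) integrable_on cbox 0 1"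
      by (intro integrable_continuous continuous_on_mult kernel continuous_intros) simp
  next
    show "continuous_on (ball z \<rho> \<times> cbox 0 1) (\<lambda>(\<zeta>, t). H' \<zeta> (circlepath w R t) * circle_deriv_kernel w R w t)"
      using continuous_on_mult[OF along_circle[OF cont'] kernel[OF continuous_on_snd[OF continuous_on_id]]]
      by (simp add: split_beta)
  qed (use radii in auto)
  then show ?thesis
    using at_within_open[of z "ball z \<rho>"] radii by (simp add: cbox_interval)
qed

lemma partial_deriv_has_field_derivative_integral:
  fixes G :: "'p::metric_space \<Rightarrow> complex \<Rightarrow> complex \<Rightarrow> complex"
  assumes Om: "open Om" and cont: "continuous_on Om (\<lambda>(p, z, w). G p z w)"
    and dz: "\<And>p z w. (p, z, w) \<in> Om \<Longrightarrow> (\<lambda>z. G p z w) field_differentiable at z"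
    and dw: "\<And>p z w. (p, z, w) \<in> Om \<Longrightarrow> (\<lambda>w. G p z w) field_differentiable at w"
    and \<rho>: "\<rho> > 0" "\<And>\<zeta> u. \<zeta> \<in> cball z \<rho> \<Longrightarrow> u \<in> cball w \<rho> \<Longrightarrow> (p, \<zeta>, u) \<in> Om"
  shows "((\<lambda>\<zeta>. deriv (\<lambda>u. G p \<zeta> u) w) has_field_derivative
           integral {0..1} (\<lambda>t. deriv (\<lambda>\<zeta>. G p \<zeta> (circlepath w \<rho> t)) z * circle_deriv_kernel w \<rho> w t)) (at z)"
proof -
  define Om' where "Om' = {x. (p, snd x, fst x) \<in> Om}"
  have "open Om'"
    using continuous_open_vimage[OF Om, of "\<lambda>x. (p, snd x, fst x)"]
    by (simp add: Om'_def vimage_def split_beta continuous_intros)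
  moreover have "continuous_on Om' (\<lambda>x. (\<lambda>(p, z, w). G p z w) (p, snd x, fst x))"
    by (rule continuous_on_compose2[OF cont]) (auto simp: Om'_def intro!: continuous_intros)
  ultimately have "continuous_on Om' (\<lambda>(u, \<zeta>). deriv (\<lambda>\<zeta>. G p \<zeta> u) \<zeta>)"
    by (intro continuous_on_deriv_param) (auto simp: Om'_def split_beta intro: dz)
  then have "continuous_on (ball z \<rho> \<times> cball w \<rho>) (\<lambda>x. (\<lambda>(u, \<zeta>). deriv (\<lambda>\<zeta>. G p \<zeta> u) \<zeta>) (snd x, fst x))"
    by (rule continuous_on_compose2) (use \<rho>(2) in \<open>auto simp: Om'_def intro!: continuous_intros\<close>)
  moreover have "continuous_on (ball z \<rho> \<times> cball w \<rho>) (\<lambda>x. (\<lambda>(p, z, w). G p z w) (p, fst x, snd x))"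
    by (rule continuous_on_compose2[OF cont]) (use \<rho>(2) in \<open>auto intro!: continuous_intros\<close>)
  ultimately have leibniz: "((\<lambda>\<zeta>. integral {0..1} (\<lambda>t. G p \<zeta> (circlepath w \<rho> t) * circle_deriv_kernel w \<rho> w t))
      has_field_derivative
      integral {0..1} (\<lambda>t. deriv (\<lambda>\<zeta>. G p \<zeta> (circlepath w \<rho> t)) z * circle_deriv_kernel w \<rho> w t)) (at z)"
    using \<rho> by (intro has_field_derivative_circle_integral_param)
      (auto simp: split_beta intro!: field_differentiable_derivI dz)
  have cauchy: "integral {0..1} (\<lambda>t. G p \<zeta> (circlepath w \<rho> t) * circle_deriv_kernel w \<rho> w t)
      = deriv (\<lambda>u. G p \<zeta> u) w"
    if "\<zeta> \<in> ball z \<rho>" for \<zeta>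
  proof -
    have "(\<lambda>u. G p \<zeta> u) holomorphic_on cball w \<rho>"
      using that \<rho> dw by (auto simp: holomorphic_on_def intro: field_differentiable_at_within)
    then show ?thesis
      using \<rho>(1) by (intro DERIV_imp_deriv[symmetric] has_field_derivative_circle_integral)
        (auto intro: holomorphic_on_imp_continuous_on holomorphic_on_subset)
  qed
  show ?thesis
    by (rule has_field_derivative_transform_within_open[OF leibniz, of "ball z \<rho>"]) (use \<rho>(1) cauchy in auto)
qed

lemma partial_deriv_field_differentiable:
  fixes G :: "'p::metric_space \<Rightarrow> complex \<Rightarrow> complex \<Rightarrow> complex"
  assumes "open Om" "continuous_on Om (\<lambda>(p, z, w). G p z w)"
    and "\<And>p z w. (p, z, w) \<in> Om \<Longrightarrow> (\<lambda>z. G p z w) field_differentiable at z"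
    and "\<And>p z w. (p, z, w) \<in> Om \<Longrightarrow> (\<lambda>w. G p z w) field_differentiable at w"
    and "(p, z, w) \<in> Om"
  shows "(\<lambda>\<zeta>. deriv (\<lambda>u. G p \<zeta> u) w) field_differentiable at z"
proof -
  obtain \<rho> where "\<rho> > 0" "\<And>\<zeta> u. \<zeta> \<in> cball z \<rho> \<Longrightarrow> u \<in> cball w \<rho> \<Longrightarrow> (p, \<zeta>, u) \<in> Om"
    using open_contains_cball_pair[OF assms(1,5)] by blast
  from partial_deriv_has_field_derivative_integral[OF assms(1-4) this] show ?thesis
    unfolding field_differentiable_def by blast
qed

lemma partial_derivs_commute:
  fixes G :: "'p::metric_space \<Rightarrow> complex \<Rightarrow> complex \<Rightarrow> complex"
  assumes Om: "open Om" and cont: "continuous_on Om (\<lambda>(p, z, w). G p z w)"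
    and dz: "\<And>p z w. (p, z, w) \<in> Om \<Longrightarrow> (\<lambda>z. G p z w) field_differentiable at z"
    and dw: "\<And>p z w. (p, z, w) \<in> Om \<Longrightarrow> (\<lambda>w. G p z w) field_differentiable at w"
    and pzw: "(p, z, w) \<in> Om"
  shows "((\<lambda>u. deriv (\<lambda>\<zeta>. G p \<zeta> u) z) has_field_derivative deriv (\<lambda>\<zeta>. deriv (\<lambda>u. G p \<zeta> u) w) z) (at w)"
proof -
  obtain \<rho> where \<rho>: "\<rho> > 0" "\<And>\<zeta> u. \<zeta> \<in> cball z \<rho> \<Longrightarrow> u \<in> cball w \<rho> \<Longrightarrow> (p, \<zeta>, u) \<in> Om"
    using open_contains_cball_pair[OF Om pzw] by metis
  define I where
    "I = integral {0..1} (\<lambda>t. deriv (\<lambda>\<zeta>. G p \<zeta> (circlepath w \<rho> t)) z * circle_deriv_kernel w \<rho> w t)"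
  have second: "deriv (\<lambda>\<zeta>. deriv (\<lambda>u. G p \<zeta> u) w) z = I"
    unfolding I_def by (rule DERIV_imp_deriv partial_deriv_has_field_derivative_integral[OF Om cont dz dw \<rho>])+
  have "((\<lambda>u. deriv (\<lambda>\<zeta>. G p \<zeta> u) z) has_field_derivative I) (at w)"
  proof -
    define Om' where "Om' = {x. (fst x, snd (snd x), fst (snd x)) \<in> Om}"
    have open': "open Om'"
      using continuous_open_vimage[OF Om, of "\<lambda>x. (fst x, snd (snd x), fst (snd x))"]
      by (simp add: Om'_def vimage_def continuous_intros)
    have "continuous_on Om' (\<lambda>x. (\<lambda>(p, z, w). G p z w) (fst x, snd (snd x), fst (snd x)))"
      by (rule continuous_on_compose2[OF cont]) (auto simp: Om'_def intro!: continuous_intros)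
    then have cont': "continuous_on Om' (\<lambda>(q, a, b). G q b a)"
      by (simp add: split_beta)
    have "(\<lambda>u. deriv (\<lambda>\<zeta>. G p \<zeta> u) z) field_differentiable at u" if "u \<in> cball w \<rho>" for u
      using partial_deriv_field_differentiable[OF open' cont', of p u z] \<rho> that dz dw
      by (simp add: Om'_def)
    then have "(\<lambda>u. deriv (\<lambda>\<zeta>. G p \<zeta> u) z) holomorphic_on cball w \<rho>"
      by (auto simp: holomorphic_on_def intro: field_differentiable_at_within)
    then show ?thesis
      unfolding I_def using \<rho>(1) by (intro has_field_derivative_circle_integral)
        (auto intro: holomorphic_on_imp_continuous_on holomorphic_on_subset)
  qed
  then show ?thesis unfolding second .
qed

lemma partial_derivs_commute_vimage:
  fixes F :: "'b::topological_space \<Rightarrow> complex" and emb :: "'p::metric_space \<times> complex \<times> complex \<Rightarrow> 'b"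
  assumes U: "open U" and cont: "continuous_on U F" and emb: "continuous_on UNIV emb"
    and dz: "\<And>q z w. emb (q, z, w) \<in> U \<Longrightarrow> (\<lambda>z. F (emb (q, z, w))) field_differentiable at z"
    and dw: "\<And>q z w. emb (q, z, w) \<in> U \<Longrightarrow> (\<lambda>w. F (emb (q, z, w))) field_differentiable at w"
    and qzw: "emb (q, z, w) \<in> U"
  shows "((\<lambda>u. deriv (\<lambda>\<zeta>. F (emb (q, \<zeta>, u))) z) has_field_derivative
          deriv (\<lambda>\<zeta>. deriv (\<lambda>u. F (emb (q, \<zeta>, u))) w) z) (at w)"
proof -
  have open': "open (emb -` U)"
    using emb U by (simp add: continuous_on_open_vimage)
  have "continuous_on (emb -` U) (\<lambda>x. F (emb x))"
    by (rule continuous_on_compose2[OF cont continuous_on_subset[OF emb]]) auto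
  then have cont': "continuous_on (emb -` U) (\<lambda>(q, z, w). F (emb (q, z, w)))"
    by (simp add: split_beta)
  show ?thesis
    using partial_derivs_commute[OF open' cont'] dz dw qzw
    unfolding vimage_def mem_Collect_eq by blast
qed

section \<open>Separately holomorphic functions of four variables\<close>

lemma hol2_imp_open: "hol2 S g \<Longrightarrow> open S"
  by (simp add: hol2_def)

lemma hol4_imp_open: "hol4 U f \<Longrightarrow> open U"
  by (simp add: hol4_def)

lemma hol4_imp_continuous_on: "hol4 U f \<Longrightarrow> continuous_on U (\<lambda>(a, b, c, d). f a b c d)"
  by (simp add: hol4_def)

lemma hol4_field_differentiable:
  assumes "hol4 U f" "(a, b, c, d) \<in> U"
  shows "(\<lambda>v. f v b c d) field_differentiable at a" "(\<lambda>v. f a v c d) field_differentiable at b"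
    and "(\<lambda>v. f a b v d) field_differentiable at c" "(\<lambda>v. f a b c v) field_differentiable at d"
  using assms unfolding hol4_def by fast+

lemma hol4_subset: "hol4 U f \<Longrightarrow> open V \<Longrightarrow> V \<subseteq> U \<Longrightarrow> hol4 V f"
  unfolding hol4_def by (blast intro: continuous_on_subset)

lemma continuous_on_hol4_compose:
  assumes "hol4 U f"
    and "continuous_on X g1" "continuous_on X g2" "continuous_on X g3" "continuous_on X g4"
    and "\<And>x. x \<in> X \<Longrightarrow> (g1 x, g2 x, g3 x, g4 x) \<in> U"
  shows "continuous_on X (\<lambda>x. f (g1 x) (g2 x) (g3 x) (g4 x))"
proof -
  have "continuous_on X (\<lambda>x. (g1 x, g2 x, g3 x, g4 x))" using assms(2-5) by (intro continuous_intros)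
  from continuous_on_compose2[OF hol4_imp_continuous_on[OF assms(1)] this] assms(6) show ?thesis by auto
qed

lemma deriv_has_field_derivative_open:
  fixes g :: "complex \<Rightarrow> complex"
  assumes "open S" "\<And>v. v \<in> S \<Longrightarrow> g field_differentiable at v" "x \<in> S"
  shows "(deriv g has_field_derivative deriv (deriv g) x) (at x)"
proof -
  have "g holomorphic_on S"
    using assms(2) by (auto simp: holomorphic_on_def intro: field_differentiable_at_within)
  then have "deriv g holomorphic_on S" using assms(1) by (rule holomorphic_deriv)
  then show ?thesis
    using assms(1,3) by (intro field_differentiable_derivI holomorphic_on_imp_differentiable_at)
qed

lemma open_slices:
  fixes W :: "pt4 set"
  assumes "open W"
  shows "open {v. (v, b, c, d) \<in> W}" "open {v. (a, v, c, d) \<in> W}" "open {v. (a, b, v, d) \<in> W}"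
  using continuous_open_vimage[OF assms, of "\<lambda>v. (v, b, c, d)"]
    continuous_open_vimage[OF assms, of "\<lambda>v. (a, v, c, d)"]
    continuous_open_vimage[OF assms, of "\<lambda>v. (a, b, v, d)"]
  by (simp_all add: vimage_def continuous_intros)

lemma partials_cong:
  assumes "open W" "(a, b, c, d) \<in> W" "\<And>a b c d. (a, b, c, d) \<in> W \<Longrightarrow> g a b c d = h a b c d"
  shows "pd_u1 g a b c d = pd_u1 h a b c d" "pd_u2 g a b c d = pd_u2 h a b c d"
    and "pd_x g a b c d = pd_x h a b c d"
proof -
  have "\<forall>\<^sub>F v in nhds a. (v, b, c, d) \<in> W" "\<forall>\<^sub>F v in nhds b. (a, v, c, d) \<in> W"
    "\<forall>\<^sub>F v in nhds c. (a, b, v, d) \<in> W"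
    using eventually_nhds_in_open[OF open_slices(1)[OF assms(1)]]
      eventually_nhds_in_open[OF open_slices(2)[OF assms(1)]]
      eventually_nhds_in_open[OF open_slices(3)[OF assms(1)]] assms(2)
    by auto
  then show "pd_u1 g a b c d = pd_u1 h a b c d" "pd_u2 g a b c d = pd_u2 h a b c d"
    and "pd_x g a b c d = pd_x h a b c d"
    unfolding pd_u1_def pd_u2_def pd_x_def
    by (auto intro!: deriv_cong_ev elim!: eventually_mono simp: assms(3))
qed

lemma has_field_derivative_vanishing_on_open:
  assumes "(g has_field_derivative D) (at x)" "open S" "x \<in> S" "\<And>y. y \<in> S \<Longrightarrow> g y = 0"
  shows "D = 0"
proof -
  have "(g has_field_derivative 0) (at x)"
    by (rule has_field_derivative_transform_within_open[OF DERIV_const assms(2,3)]) (simp add: assms(4))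
  with assms(1) show ?thesis by (rule DERIV_unique)
qed

lemma hol4_second_partials:
  assumes "hol4 U f" "(a, b, c, d) \<in> U"
  shows "((\<lambda>v. pd_u1 f v b c d) has_field_derivative pd_u1 (pd_u1 f) a b c d) (at a)"
    and "((\<lambda>v. pd_u2 f a v c d) has_field_derivative pd_u2 (pd_u2 f) a b c d) (at b)"
proof -
  note S = open_slices[OF hol4_imp_open[OF assms(1)]]
  have "(deriv (\<lambda>v. f v b c d) has_field_derivative deriv (deriv (\<lambda>v. f v b c d)) a) (at a)"
    by (rule deriv_has_field_derivative_open[OF S(1)])
      (use assms hol4_field_differentiable(1)[OF assms(1)] in auto)
  then show "((\<lambda>v. pd_u1 f v b c d) has_field_derivative pd_u1 (pd_u1 f) a b c d) (at a)"
    unfolding pd_u1_def .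
  have "(deriv (\<lambda>v. f a v c d) has_field_derivative deriv (deriv (\<lambda>v. f a v c d)) b) (at b)"
    by (rule deriv_has_field_derivative_open[OF S(2)])
      (use assms hol4_field_differentiable(2)[OF assms(1)] in auto)
  then show "((\<lambda>v. pd_u2 f a v c d) has_field_derivative pd_u2 (pd_u2 f) a b c d) (at b)"
    unfolding pd_u2_def .
qed

(* pd_u2 (pd_u1 f) is the u2-derivative of pd_u1 f: each statement is an instance of Schwarz's theorem. *)
lemma hol4_mixed_partials:
  assumes h: "hol4 U f" and x: "(a, b, c, d) \<in> U"
  shows "((\<lambda>v. pd_u2 f v b c d) has_field_derivative pd_u2 (pd_u1 f) a b c d) (at a)"
    and "((\<lambda>v. pd_u1 f a v c d) has_field_derivative pd_u1 (pd_u2 f) a b c d) (at b)"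
    and "((\<lambda>v. pd_x f a v c d) has_field_derivative pd_x (pd_u2 f) a b c d) (at b)"
    and "((\<lambda>v. pd_x f v b c d) has_field_derivative pd_x (pd_u1 f) a b c d) (at a)"
    and "((\<lambda>v. pd_u1 f a b v d) has_field_derivative pd_u1 (pd_x f) a b c d) (at c)"
  unfolding pd_u1_def pd_u2_def pd_x_def
  subgoal
    by (rule partial_derivs_commute_vimage[OF hol4_imp_open[OF h] hol4_imp_continuous_on[OF h],
          of "\<lambda>(q, z, w). (w, z, q)" "(c, d)", simplified])
      (use h x in \<open>auto simp: hol4_def split_beta intro!: continuous_intros\<close>)
  subgoal
    by (rule partial_derivs_commute_vimage[OF hol4_imp_open[OF h] hol4_imp_continuous_on[OF h],
          of "\<lambda>(q, z, w). (z, w, q)" "(c, d)", simplified])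
      (use h x in \<open>auto simp: hol4_def split_beta intro!: continuous_intros\<close>)
  subgoal
    by (rule partial_derivs_commute_vimage[OF hol4_imp_open[OF h] hol4_imp_continuous_on[OF h],
          of "\<lambda>(q, z, w). (fst q, w, z, snd q)" "(a, d)", simplified])
      (use h x in \<open>auto simp: hol4_def split_beta intro!: continuous_intros\<close>)
  subgoal
    by (rule partial_derivs_commute_vimage[OF hol4_imp_open[OF h] hol4_imp_continuous_on[OF h],
          of "\<lambda>(q, z, w). (w, fst q, z, snd q)" "(b, d)", simplified])
      (use h x in \<open>auto simp: hol4_def split_beta intro!: continuous_intros\<close>)
  subgoal
    by (rule partial_derivs_commute_vimage[OF hol4_imp_open[OF h] hol4_imp_continuous_on[OF h],
          of "\<lambda>(q, z, w). (z, fst q, w, snd q)" "(b, d)", simplified])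
      (use h x in \<open>auto simp: hol4_def split_beta intro!: continuous_intros\<close>)
  done

section \<open>Segment integrals and the fibre primitive\<close>

definition polydisc :: "real \<Rightarrow> pt4 set" where
  "polydisc r = ball 0 r \<times> ball 0 r \<times> ball 0 r \<times> ball 0 r"

lemma mem_polydisc [simp]:
  "(a, b, c, d) \<in> polydisc r \<longleftrightarrow> a \<in> ball 0 r \<and> b \<in> ball 0 r \<and> c \<in> ball 0 r \<and> d \<in> ball 0 r"
  by (simp add: polydisc_def)

lemma open_polydisc: "open (polydisc r)"
  by (simp add: polydisc_def open_Times)

lemma open_contains_polydisc:
  assumes "open S" "(0, 0, 0, 0) \<in> S"
  obtains r where "r > 0" "polydisc r \<subseteq> S"
proof -
  obtain e where "e > 0" "ball 0 e \<subseteq> S"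
    using assms open_contains_ball_eq by (metis zero_prod_def)
  moreover have "(a, b, c, d) \<in> ball 0 e" if "(a, b, c, d) \<in> polydisc (e / 4)" for a b c d
  proof -
    have "norm (a, b, c, d) \<le> norm a + (norm b + (norm c + norm d))"
      by (meson add_left_mono norm_Pair_le order_trans)
    then show ?thesis using that by simp
  qed
  ultimately show ?thesis
    by (intro that[of "e / 4"]) auto
qed

lemma of_real_mult_mem_ball0: "s \<in> {0..1} \<Longrightarrow> \<beta> \<in> ball 0 r \<Longrightarrow> of_real s * \<beta> \<in> ball (0::complex) r"
  by (auto simp: norm_mult intro: le_less_trans[OF mult_left_le_one_le])

definition integral0 :: "complex \<Rightarrow> (complex \<Rightarrow> complex) \<Rightarrow> complex" where
  "integral0 \<beta> h = integral {0..1} (\<lambda>s. h (of_real s * \<beta>) * \<beta>)"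

lemma integral0_eq_contour_integral: "integral0 \<beta> h = contour_integral (linepath 0 \<beta>) h"
  unfolding integral0_def contour_integral_integral vector_derivative_linepath_at
  by (simp add: linepath_def scaleR_conv_of_real)

lemma integral0_cong:
  "(\<And>s. s \<in> {0..1} \<Longrightarrow> h (of_real s * \<beta>) = h' (of_real s * \<beta>)) \<Longrightarrow> integral0 \<beta> h = integral0 \<beta> h'"
  unfolding integral0_def by (rule integral_cong) simp

lemma integral0_cmult: "integral0 \<beta> (\<lambda>t. k * h t) = k * integral0 \<beta> h"
  unfolding integral0_def by (simp add: mult.assoc)

lemma integral0_fundamental:
  assumes "closed_segment 0 \<beta> \<subseteq> T" "\<And>t. t \<in> T \<Longrightarrow> (g has_field_derivative g' t) (at t within T)"
  shows "integral0 \<beta> g' = g \<beta> - g 0"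
proof -
  have "(g' has_contour_integral g (pathfinish (linepath 0 \<beta>)) - g (pathstart (linepath 0 \<beta>))) (linepath 0 \<beta>)"
    by (rule contour_integral_primitive[OF assms(2)]) (use assms(1) in auto)
  then show ?thesis unfolding integral0_eq_contour_integral by (simp add: contour_integral_unique)
qed

lemma has_field_derivative_integral0_upper:
  assumes T: "open T" "convex T" "0 \<in> T" "z \<in> T" and h: "h holomorphic_on T"
  shows "((\<lambda>v. integral0 v h) has_field_derivative h z) (at z)"
proof -
  obtain g where g: "\<And>x. x \<in> T \<Longrightarrow> (g has_field_derivative h x) (at x within T)"
    using holomorphic_convex_primitive'[OF T(2,1) h] by metis
  have "(g has_field_derivative h z) (at z)" using g[OF T(4)] at_within_open[OF T(4,1)] by simp
  then have "((\<lambda>v. g v - g 0) has_field_derivative h z) (at z)"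
    by (auto intro!: derivative_eq_intros)
  then show ?thesis
    by (rule has_field_derivative_transform_within_open[OF _ T(1,4)])
      (simp add: integral0_fundamental[OF closed_segment_subset[OF T(3) _ T(2)] g])
qed

lemma has_field_derivative_integral0_param:
  fixes G :: "complex \<Rightarrow> complex \<Rightarrow> complex"
  assumes cont: "continuous_on (ball 0 r \<times> ball 0 r) (\<lambda>(v, t). G v t)"
    and diff: "\<And>v t. v \<in> ball 0 r \<Longrightarrow> t \<in> ball 0 r \<Longrightarrow> (\<lambda>v. G v t) field_differentiable at v"
    and \<beta>: "\<beta> \<in> ball 0 r" and z: "z \<in> ball 0 r"
  shows "((\<lambda>v. integral0 \<beta> (G v)) has_field_derivative integral0 \<beta> (\<lambda>t. deriv (\<lambda>v. G v t) z)) (at z)"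
proof -
  define G' where "G' v t = deriv (\<lambda>v. G v t) v" for v t
  have "continuous_on (ball 0 r \<times> ball 0 r) (\<lambda>x. (\<lambda>(v, t). G v t) (snd x, fst x))"
    by (rule continuous_on_compose2[OF cont]) (auto intro!: continuous_intros)
  then have cd: "continuous_on (ball 0 r \<times> ball 0 r) (\<lambda>(t, v). G' v t)"
    unfolding G'_def using diff by (intro continuous_on_deriv_param) (auto simp: split_beta open_Times)
  have "continuous_on (ball 0 r \<times> {0..1}) (\<lambda>x. (\<lambda>(t, v). G' v t) (of_real (snd x) * \<beta>, fst x))"
  proof (rule continuous_on_compose2[OF cd])
    show "continuous_on (ball 0 r \<times> {0..1}) (\<lambda>x. (of_real (snd x) * \<beta>, fst x))"
      by (intro continuous_intros)
    show "(\<lambda>x. (of_real (snd x) * \<beta>, fst x)) ` (ball 0 r \<times> {0..1}) \<subseteq> ball 0 r \<times> ball 0 r"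
      using \<beta> of_real_mult_mem_ball0 by auto
  qed
  then have cont': "continuous_on (ball 0 r \<times> cbox 0 1) (\<lambda>(v, s). G' v (of_real s * \<beta>) * \<beta>)"
    unfolding split_beta cbox_interval by (intro continuous_on_mult_right) simp
  have "((\<lambda>v. integral (cbox 0 1) (\<lambda>s. G v (of_real s * \<beta>) * \<beta>)) has_field_derivative
      integral (cbox 0 1) (\<lambda>s. G' z (of_real s * \<beta>) * \<beta>)) (at z within ball 0 r)"
  proof (rule leibniz_rule_field_derivative[where f="\<lambda>v s. G v (of_real s * \<beta>) * \<beta>"
        and fx="\<lambda>v s. G' v (of_real s * \<beta>) * \<beta>"])
    fix v :: complex and s :: real assume "v \<in> ball 0 r" "s \<in> cbox 0 1"
    then show "((\<lambda>v. G v (of_real s * \<beta>) * \<beta>) has_field_derivative G' v (of_real s * \<beta>) * \<beta>)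
        (at v within ball 0 r)"
      unfolding G'_def using \<beta> of_real_mult_mem_ball0[of s \<beta> r]
      by (intro has_field_derivative_at_within[OF DERIV_cmult_right] field_differentiable_derivI diff) auto
  next
    fix v :: complex assume "v \<in> ball 0 r"
    have "continuous_on {0..1} (\<lambda>s. (\<lambda>(v, t). G v t) (v, of_real s * \<beta>))"
    proof (rule continuous_on_compose2[OF cont])
      show "continuous_on {0..1} (\<lambda>s. (v, of_real s * \<beta>))" by (intro continuous_intros)
      show "(\<lambda>s. (v, of_real s * \<beta>)) ` {0..1} \<subseteq> ball 0 r \<times> ball 0 r"
        using \<open>v \<in> ball 0 r\<close> \<beta> of_real_mult_mem_ball0 by auto
    qed
    then show "(\<lambda>s. G v (of_real s * \<beta>) * \<beta>) integrable_on cbox 0 1"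
      unfolding cbox_interval by (intro integrable_continuous_interval continuous_on_mult_right) simp
  qed (use cont' z in auto)
  then show ?thesis
    unfolding integral0_def G'_def using at_within_open[OF z] by (simp add: cbox_interval)
qed

lemma continuous_on_integral0:
  fixes G :: "'a::topological_space \<Rightarrow> complex \<Rightarrow> complex"
  assumes "continuous_on (X \<times> ball 0 r) (\<lambda>(x, t). G x t)" "continuous_on X \<beta>" "\<And>x. x \<in> X \<Longrightarrow> \<beta> x \<in> ball 0 r"
  shows "continuous_on X (\<lambda>x. integral0 (\<beta> x) (G x))"
proof -
  have \<beta>': "continuous_on (X \<times> {0..1}) (\<lambda>y. \<beta> (fst y))"
    by (rule continuous_on_compose2[OF assms(2) continuous_on_fst[OF continuous_on_id]]) auto
  have "continuous_on (X \<times> {0..1}) (\<lambda>y. (\<lambda>(x, t). G x t) (fst y, of_real (snd y) * \<beta> (fst y)))"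
  proof (rule continuous_on_compose2[OF assms(1)])
    show "continuous_on (X \<times> {0..1}) (\<lambda>y. (fst y, of_real (snd y) * \<beta> (fst y)))"
      by (intro continuous_intros \<beta>')
    show "(\<lambda>y. (fst y, of_real (snd y) * \<beta> (fst y))) ` (X \<times> {0..1}) \<subseteq> X \<times> ball 0 r"
      using assms(3) of_real_mult_mem_ball0 by auto
  qed
  then have "continuous_on (X \<times> cbox 0 1) (\<lambda>(x, s). G x (of_real s * \<beta> x) * \<beta> x)"
    unfolding cbox_interval split_beta by (intro continuous_on_mult \<beta>') simp
  from integral_continuous_on_param[where f="\<lambda>x s. G x (of_real s * \<beta> x) * \<beta> x", OF this] show ?thesis
    unfolding integral0_def cbox_interval .
qed

(* The primitive of A du2 - B du1 along the path (0, 0) -- (u1, 0) -- (u1, u2). *)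
definition fibre_primitive :: "fun4 \<Rightarrow> fun4 \<Rightarrow> fun4" where
  "fibre_primitive A B a b c d = integral0 b (\<lambda>t. A a t c d) - integral0 a (\<lambda>s. B s 0 c d)"

context
  fixes A B :: fun4 and r :: real
  assumes hA: "hol4 (polydisc r) A" and hB: "hol4 (polydisc r) B"
begin

lemma continuous_on_fibre_primitive_integrands:
  assumes "a \<in> ball 0 r" "b \<in> ball 0 r" "c \<in> ball 0 r" "d \<in> ball 0 r"
  shows "continuous_on (ball 0 r \<times> ball 0 r) (\<lambda>(v, t). A v t c d)"
    and "continuous_on (ball 0 r \<times> ball 0 r) (\<lambda>(v, t). A a t v d)"
    and "continuous_on (ball 0 r \<times> ball 0 r) (\<lambda>(v, t). A a t c v)"
    and "continuous_on (ball 0 r \<times> ball 0 r) (\<lambda>(v, s). B s 0 v d)"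
    and "continuous_on (ball 0 r \<times> ball 0 r) (\<lambda>(v, s). B s 0 c v)"
proof -
  from assms(1) have "0 < r" by (auto intro: le_less_trans[OF norm_ge_zero])
  with assms show "continuous_on (ball 0 r \<times> ball 0 r) (\<lambda>(v, t). A v t c d)"
    and "continuous_on (ball 0 r \<times> ball 0 r) (\<lambda>(v, t). A a t v d)"
    and "continuous_on (ball 0 r \<times> ball 0 r) (\<lambda>(v, t). A a t c v)"
    and "continuous_on (ball 0 r \<times> ball 0 r) (\<lambda>(v, s). B s 0 v d)"
    and "continuous_on (ball 0 r \<times> ball 0 r) (\<lambda>(v, s). B s 0 c v)"
    unfolding split_beta
    by (auto intro!: continuous_on_hol4_compose[OF hA] continuous_on_hol4_compose[OF hB] continuous_intros)
qed

lemma holomorphic_on_fibre_primitive_integrands: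
  assumes "a \<in> ball 0 r" "c \<in> ball 0 r" "d \<in> ball 0 r"
  shows "(\<lambda>t. A a t c d) holomorphic_on ball 0 r" "(\<lambda>s. B s 0 c d) holomorphic_on ball 0 r"
proof -
  from assms(1) have "0 \<in> ball (0::complex) r" by (auto intro: le_less_trans[OF norm_ge_zero])
  with assms show "(\<lambda>t. A a t c d) holomorphic_on ball 0 r" "(\<lambda>s. B s 0 c d) holomorphic_on ball 0 r"
    using hol4_field_differentiable(2)[OF hA] hol4_field_differentiable(1)[OF hB]
    by (auto simp: holomorphic_on_def intro: field_differentiable_at_within)
qed

lemma fibre_primitive_partials:
  assumes p: "(a, b, c, d) \<in> polydisc r"
  shows "((\<lambda>v. fibre_primitive A B v b c d) has_field_derivative
           integral0 b (\<lambda>t. pd_u1 A a t c d) - B a 0 c d) (at a)"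
    and "((\<lambda>v. fibre_primitive A B a v c d) has_field_derivative A a b c d) (at b)"
    and "((\<lambda>v. fibre_primitive A B a b v d) has_field_derivative
           integral0 b (\<lambda>t. pd_x A a t c d) - integral0 a (\<lambda>s. pd_x B s 0 c d)) (at c)"
    and "(\<lambda>v. fibre_primitive A B a b c v) field_differentiable at d"
proof -
  from p have in_ball: "a \<in> ball 0 r" "b \<in> ball 0 r" "c \<in> ball 0 r" "d \<in> ball 0 r"
    by auto
  then have in_ball0: "0 \<in> ball (0::complex) r" by (auto intro: le_less_trans[OF norm_ge_zero])
  note cont = continuous_on_fibre_primitive_integrands[OF in_ball(1-4)]
  note diffA = hol4_field_differentiable[OF hA] and diffB = hol4_field_differentiable[OF hB]
  note param = has_field_derivative_integral0_param[of r]
  note upper = has_field_derivative_integral0_upper[OF open_ball convex_ball in_ball0]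
  show "((\<lambda>v. fibre_primitive A B v b c d) has_field_derivative
           integral0 b (\<lambda>t. pd_u1 A a t c d) - B a 0 c d) (at a)"
    unfolding fibre_primitive_def pd_u1_def
    by (intro DERIV_diff param[OF cont(1)] upper holomorphic_on_fibre_primitive_integrands)
      (use in_ball diffA in auto)
  show "((\<lambda>v. fibre_primitive A B a v c d) has_field_derivative A a b c d) (at b)"
    unfolding fibre_primitive_def
    using DERIV_diff[OF upper[OF in_ball(2) holomorphic_on_fibre_primitive_integrands(1)[OF in_ball(1,3,4)]]
        DERIV_const]
    by simp
  show "((\<lambda>v. fibre_primitive A B a b v d) has_field_derivative
           integral0 b (\<lambda>t. pd_x A a t c d) - integral0 a (\<lambda>s. pd_x B s 0 c d)) (at c)"
    unfolding fibre_primitive_def pd_x_def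
    by (intro DERIV_diff param[OF cont(2)] param[OF cont(4)]) (use in_ball in_ball0 diffA diffB in auto)
  have "((\<lambda>v. fibre_primitive A B a b c v) has_field_derivative
           integral0 b (\<lambda>t. deriv (\<lambda>v. A a t c v) d) - integral0 a (\<lambda>s. deriv (\<lambda>v. B s 0 c v) d)) (at d)"
    unfolding fibre_primitive_def
    by (intro DERIV_diff param[OF cont(3)] param[OF cont(5)]) (use in_ball in_ball0 diffA diffB in auto)
  then show "(\<lambda>v. fibre_primitive A B a b c v) field_differentiable at d"
    unfolding field_differentiable_def by (rule exI)
qed

lemma pd_u2_fibre_primitive: "(a, b, c, d) \<in> polydisc r \<Longrightarrow> pd_u2 (fibre_primitive A B) a b c d = A a b c d"
  unfolding pd_u2_def by (rule DERIV_imp_deriv fibre_primitive_partials(2))+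

lemma hol4_fibre_primitive: "hol4 (polydisc r) (fibre_primitive A B)"
proof -
  have slice: "(fst (fst y), snd y, fst (snd (snd (fst y))), snd (snd (snd (fst y)))) \<in> polydisc r"
      "(snd y, 0, fst (snd (snd (fst y))), snd (snd (snd (fst y)))) \<in> polydisc r"
    if "y \<in> polydisc r \<times> ball 0 r" for y
    using that by (auto simp: polydisc_def mem_Times_iff intro: le_less_trans[OF norm_ge_zero])
  have "continuous_on (polydisc r)
      (\<lambda>x. integral0 (fst (snd x)) (\<lambda>t. A (fst x) t (fst (snd (snd x))) (snd (snd (snd x)))))"
  proof (rule continuous_on_integral0[where G="\<lambda>x t. A (fst x) t (fst (snd (snd x))) (snd (snd (snd x)))"])
    show "continuous_on (polydisc r \<times> ball 0 r) (\<lambda>(x, t). A (fst x) t (fst (snd (snd x))) (snd (snd (snd x))))"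
      unfolding split_beta by (rule continuous_on_hol4_compose[OF hA]; (intro continuous_intros slice)?)
  qed (auto simp: polydisc_def intro!: continuous_intros)
  moreover have "continuous_on (polydisc r)
      (\<lambda>x. integral0 (fst x) (\<lambda>s. B s 0 (fst (snd (snd x))) (snd (snd (snd x)))))"
  proof (rule continuous_on_integral0[where G="\<lambda>x s. B s 0 (fst (snd (snd x))) (snd (snd (snd x)))"])
    show "continuous_on (polydisc r \<times> ball 0 r) (\<lambda>(x, s). B s 0 (fst (snd (snd x))) (snd (snd (snd x))))"
      unfolding split_beta by (rule continuous_on_hol4_compose[OF hB]; (intro continuous_intros slice)?)
  qed (auto simp: polydisc_def intro!: continuous_intros)
  ultimately have "continuous_on (polydisc r) (\<lambda>(a, b, c, d). fibre_primitive A B a b c d)"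
    unfolding fibre_primitive_def split_beta by (intro continuous_on_diff)
  moreover have "\<forall>(a, b, c, d) \<in> polydisc r.
      (\<lambda>v. fibre_primitive A B v b c d) field_differentiable at a \<and>
      (\<lambda>v. fibre_primitive A B a v c d) field_differentiable at b \<and>
      (\<lambda>v. fibre_primitive A B a b v d) field_differentiable at c \<and>
      (\<lambda>v. fibre_primitive A B a b c v) field_differentiable at d"
  proof (intro ballI, clarify)
    fix a b c d assume "(a, b, c, d) \<in> polydisc r"
    from fibre_primitive_partials[OF this] show "(\<lambda>v. fibre_primitive A B v b c d) field_differentiable at a \<and>
      (\<lambda>v. fibre_primitive A B a v c d) field_differentiable at b \<and>
      (\<lambda>v. fibre_primitive A B a b v d) field_differentiable at c \<and>
      (\<lambda>v. fibre_primitive A B a b c v) field_differentiable at d"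
      unfolding field_differentiable_def by blast
  qed
  ultimately show ?thesis
    unfolding hol4_def using open_polydisc by blast
qed

end

section \<open>Symmetries of fibrewise area-preserving vector fields\<close>

definition fibre_area_preserving_at :: "fun4 \<Rightarrow> fun4 \<Rightarrow> pt4 \<Rightarrow> bool" where
  "fibre_area_preserving_at P Q p \<longleftrightarrow> (case p of (a, b, c, d) \<Rightarrow>
     (\<lambda>v. P v b c d) field_differentiable at a \<and> (\<lambda>v. P a v c d) field_differentiable at b \<and>
     (\<lambda>v. Q v b c d) field_differentiable at a \<and> (\<lambda>v. Q a v c d) field_differentiable at b \<and>
     pd_u1 P a b c d + pd_u2 Q a b c d = 0)"

definition sympl_symm_at :: "fun4 \<Rightarrow> fun4 \<Rightarrow> fun4 \<Rightarrow> fun4 \<Rightarrow> fun4 \<Rightarrow> fun4 \<Rightarrow> pt4 \<Rightarrow> bool" where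
  "sympl_symm_at P Q R A B C p \<longleftrightarrow> (case p of (a, b, c, d) \<Rightarrow>
     C a b c d = 0 \<and>
     pd_u1 A a b c d + pd_u2 B a b c d = 0 \<and>
     vf_apply A B C P a b c d - vf_apply P Q R A a b c d = 0 \<and>
     vf_apply A B C Q a b c d - vf_apply P Q R B a b c d = 0 \<and>
     vf_apply A B C R a b c d - vf_apply P Q R C a b c d = 0)"

lemma vert_sympl_symm_at_eq: "vert_sympl_symm_at \<chi>0 \<chi>1 = sympl_symm_at (Z_u1 \<chi>0 \<chi>1) (Z_u2 \<chi>0 \<chi>1) Z_x"
  by (simp add: fun_eq_iff vert_sympl_symm_at_def sympl_symm_at_def)

lemma Z_x_eq: "Z_x = (\<lambda>_ _ x e. x * (x - e))"
  by (simp add: fun_eq_iff Z_x_def)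

lemma fibre_area_preserving_at_Z:
  assumes "hol2 S \<chi>0" "hol2 S \<chi>1" "(a * b, d) \<in> S"
  shows "fibre_area_preserving_at (Z_u1 \<chi>0 \<chi>1) (Z_u2 \<chi>0 \<chi>1) (a, b, c, d)"
proof -
  define k where "k = deriv (\<lambda>h. chi \<chi>0 \<chi>1 h c d) (a * b)"
  have "(\<lambda>h. \<chi>0 h d) field_differentiable at (a * b)" "(\<lambda>h. \<chi>1 h d) field_differentiable at (a * b)"
    using assms unfolding hol2_def by auto
  then have "(\<lambda>h. chi \<chi>0 \<chi>1 h c d) field_differentiable at (a * b)"
    unfolding chi_def by (intro field_differentiable_add field_differentiable_mult field_differentiable_const)
  then have "((\<lambda>h. chi \<chi>0 \<chi>1 h c d) has_field_derivative k) (at (a * b))"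
    unfolding k_def by (rule field_differentiable_derivI)
  then have chi_a: "((\<lambda>v. chi \<chi>0 \<chi>1 (v * b) c d) has_field_derivative k * b) (at a)"
    and chi_b: "((\<lambda>v. chi \<chi>0 \<chi>1 (a * v) c d) has_field_derivative k * a) (at b)"
    by (auto intro!: DERIV_chain2[where f="\<lambda>h. chi \<chi>0 \<chi>1 h c d"] derivative_eq_intros)
  have P_a: "((\<lambda>v. Z_u1 \<chi>0 \<chi>1 v b c d) has_field_derivative k * b * a + chi \<chi>0 \<chi>1 (a * b) c d) (at a)"
    and Q_b: "((\<lambda>v. Z_u2 \<chi>0 \<chi>1 a v c d) has_field_derivative - (k * a * b + chi \<chi>0 \<chi>1 (a * b) c d)) (at b)"
    unfolding Z_u1_def Z_u2_def
    using DERIV_mult[OF chi_a DERIV_ident] DERIV_minus[OF DERIV_mult[OF chi_b DERIV_ident]]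
    by (simp_all add: mult.commute)
  moreover have "((\<lambda>v. Z_u1 \<chi>0 \<chi>1 a v c d) has_field_derivative k * a * a) (at b)"
    and "((\<lambda>v. Z_u2 \<chi>0 \<chi>1 v b c d) has_field_derivative - (k * b * b)) (at a)"
    unfolding Z_u1_def Z_u2_def
    using DERIV_cmult_right[OF chi_b, of a] DERIV_minus[OF DERIV_cmult_right[OF chi_a, of b]]
    by simp_all
  ultimately show ?thesis
    unfolding fibre_area_preserving_at_def pd_u1_def pd_u2_def field_differentiable_def
    by (auto simp: DERIV_imp_deriv[OF P_a] DERIV_imp_deriv[OF Q_b])
qed

lemma first_integral_partials:
  assumes f: "hol4 W f" and p: "(a, b, c, d) \<in> W"
    and area: "fibre_area_preserving_at P Q (a, b, c, d)"
    and first: "\<forall>a b c d. (a, b, c, d) \<in> W \<longrightarrow> vf_apply P Q (\<lambda>_ _. R) f a b c d = 0"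
  shows "pd_u1 P a b c d * pd_u1 f a b c d + P a b c d * pd_u1 (pd_u1 f) a b c d
      + pd_u1 Q a b c d * pd_u2 f a b c d + Q a b c d * pd_u2 (pd_u1 f) a b c d
      + R c d * pd_x (pd_u1 f) a b c d = 0" (is ?u1)
    and "pd_u2 P a b c d * pd_u1 f a b c d + P a b c d * pd_u1 (pd_u2 f) a b c d
      + pd_u2 Q a b c d * pd_u2 f a b c d + Q a b c d * pd_u2 (pd_u2 f) a b c d
      + R c d * pd_x (pd_u2 f) a b c d = 0" (is ?u2)
proof -
  have dP: "((\<lambda>v. P v b c d) has_field_derivative pd_u1 P a b c d) (at a)"
      "((\<lambda>v. P a v c d) has_field_derivative pd_u2 P a b c d) (at b)"
    and dQ: "((\<lambda>v. Q v b c d) has_field_derivative pd_u1 Q a b c d) (at a)"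
      "((\<lambda>v. Q a v c d) has_field_derivative pd_u2 Q a b c d) (at b)"
    using area unfolding fibre_area_preserving_at_def pd_u1_def pd_u2_def
    by (auto intro: field_differentiable_derivI)
  note second = hol4_second_partials[OF f p] and mixed = hol4_mixed_partials[OF f p]
  note S = open_slices[OF hol4_imp_open[OF f]]
  have "((\<lambda>v. vf_apply P Q (\<lambda>_ _. R) f v b c d) has_field_derivative
      pd_u1 P a b c d * pd_u1 f a b c d + pd_u1 (pd_u1 f) a b c d * P a b c d
      + (pd_u1 Q a b c d * pd_u2 f a b c d + pd_u2 (pd_u1 f) a b c d * Q a b c d)
      + R c d * pd_x (pd_u1 f) a b c d) (at a)"
    unfolding vf_apply_def by (intro DERIV_add DERIV_mult DERIV_cmult dP dQ second mixed)
  from has_field_derivative_vanishing_on_open[OF this S(1)] p first show ?u1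
    by (simp add: algebra_simps)
  have "((\<lambda>v. vf_apply P Q (\<lambda>_ _. R) f a v c d) has_field_derivative
      pd_u2 P a b c d * pd_u1 f a b c d + pd_u1 (pd_u2 f) a b c d * P a b c d
      + (pd_u2 Q a b c d * pd_u2 f a b c d + pd_u2 (pd_u2 f) a b c d * Q a b c d)
      + R c d * pd_x (pd_u2 f) a b c d) (at b)"
    unfolding vf_apply_def by (intro DERIV_add DERIV_mult DERIV_cmult dP dQ second mixed)
  from has_field_derivative_vanishing_on_open[OF this S(2)] p first show ?u2
    by (simp add: algebra_simps)
qed

lemma sympl_symm_at_hamiltonian:
  assumes f: "hol4 W f" and p: "(a, b, c, d) \<in> W"
    and ham: "\<forall>(a, b, c, d) \<in> W. A a b c d = pd_u2 f a b c d \<and> B a b c d = - pd_u1 f a b c d \<and>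
       C a b c d = 0 \<and> vf_apply P Q (\<lambda>_ _. R) f a b c d = 0"
    and area: "fibre_area_preserving_at P Q (a, b, c, d)"
  shows "sympl_symm_at P Q (\<lambda>_ _. R) A B C (a, b, c, d)"
proof -
  from ham have ham': "\<And>a b c d. (a, b, c, d) \<in> W \<Longrightarrow> A a b c d = pd_u2 f a b c d \<and>
      B a b c d = - pd_u1 f a b c d \<and> C a b c d = 0 \<and> vf_apply P Q (\<lambda>_ _. R) f a b c d = 0"
    by blast
  note W = hol4_imp_open[OF f]
  note second = hol4_second_partials[OF f p] and mixed = hol4_mixed_partials[OF f p]
  have "\<forall>a b c d. (a, b, c, d) \<in> W \<longrightarrow> vf_apply P Q (\<lambda>_ _. R) f a b c d = 0"
    using ham' by blast
  note identities = first_integral_partials[OF f p area this]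
  have dA: "pd_u1 A a b c d = pd_u1 (pd_u2 f) a b c d" "pd_u2 A a b c d = pd_u2 (pd_u2 f) a b c d"
      "pd_x A a b c d = pd_x (pd_u2 f) a b c d"
    using partials_cong[OF W p, of A "pd_u2 f"] ham' by blast+
  have "pd_u1 B a b c d = pd_u1 (\<lambda>a b c d. - pd_u1 f a b c d) a b c d"
      "pd_u2 B a b c d = pd_u2 (\<lambda>a b c d. - pd_u1 f a b c d) a b c d"
      "pd_x B a b c d = pd_x (\<lambda>a b c d. - pd_u1 f a b c d) a b c d"
    using partials_cong[OF W p, of B "\<lambda>a b c d. - pd_u1 f a b c d"] ham' by blast+
  then have dB: "pd_u1 B a b c d = - pd_u1 (pd_u1 f) a b c d" "pd_u2 B a b c d = - pd_u1 (pd_u2 f) a b c d"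
      "pd_x B a b c d = - pd_u1 (pd_x f) a b c d"
    unfolding pd_u1_def pd_u2_def pd_x_def
    by (simp_all only: DERIV_imp_deriv[OF DERIV_minus[OF second(1)[unfolded pd_u1_def]]]
      DERIV_imp_deriv[OF DERIV_minus[OF mixed(2)[unfolded pd_u1_def pd_u2_def]]]
      DERIV_imp_deriv[OF DERIV_minus[OF mixed(5)[unfolded pd_u1_def pd_x_def]]])
  have dC: "pd_u1 C a b c d = 0" "pd_u2 C a b c d = 0" "pd_x C a b c d = 0"
    using partials_cong[OF W p, of C "\<lambda>_ _ _ _. 0"] ham' by (simp_all add: pd_u1_def pd_u2_def pd_x_def)
  have swap: "pd_u1 (pd_u2 f) a b c d = pd_u2 (pd_u1 f) a b c d"
      "pd_u1 (pd_x f) a b c d = pd_x (pd_u1 f) a b c d"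
    using DERIV_imp_deriv[OF mixed(1)] DERIV_imp_deriv[OF mixed(4)] by (simp_all add: pd_u1_def)
  have div: "pd_u1 P a b c d + pd_u2 Q a b c d = 0"
    using area by (simp add: fibre_area_preserving_at_def)
  have dR: "pd_u1 (\<lambda>_ _. R) a b c d = 0" "pd_u2 (\<lambda>_ _. R) a b c d = 0"
    by (simp_all add: pd_u1_def pd_u2_def)
  have vals: "A a b c d = pd_u2 f a b c d" "B a b c d = - pd_u1 f a b c d" "C a b c d = 0"
    using ham' p by auto
  show ?thesis
    unfolding sympl_symm_at_def vf_apply_def prod.case dA dB dC dR vals
    by (intro conjI)
      (simp, simp, (insert identities(2) div, algebra), (insert identities(1) div swap, algebra), simp)
qed

context
  fixes A B C P Q :: fun4 and R :: "complex \<Rightarrow> complex \<Rightarrow> complex" and r :: real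
  assumes hA: "hol4 (polydisc r) A" and hB: "hol4 (polydisc r) B"
    and symm: "\<forall>p \<in> polydisc r. sympl_symm_at P Q (\<lambda>_ _. R) A B C p"
    and area: "\<forall>p \<in> polydisc r. fibre_area_preserving_at P Q p"
    and Q_axis: "\<And>a c d. Q a 0 c d = 0" and P_origin: "\<And>c d. P 0 0 c d = 0"
begin

lemma pd_u1_fibre_primitive:
  assumes p: "(a, b, c, d) \<in> polydisc r"
  shows "pd_u1 (fibre_primitive A B) a b c d = - B a b c d"
proof -
  have "0 \<in> ball (0::complex) r" using p by (auto intro: le_less_trans[OF norm_ge_zero])
  then have in_ball: "closed_segment 0 b \<subseteq> ball 0 r" "\<And>t. t \<in> ball 0 r \<Longrightarrow> (a, t, c, d) \<in> polydisc r"
    using p closed_segment_subset[of 0 "ball 0 r" b] by auto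
  have "integral0 b (\<lambda>t. pd_u1 A a t c d) = integral0 b (\<lambda>t. - pd_u2 B a t c d)"
  proof (rule integral0_cong)
    fix s :: real assume "s \<in> {0..1}"
    then have "(a, of_real s * b, c, d) \<in> polydisc r" using p of_real_mult_mem_ball0 by simp
    from symm[rule_format, OF this] show "pd_u1 A a (of_real s * b) c d = - pd_u2 B a (of_real s * b) c d"
      by (simp add: sympl_symm_at_def eq_neg_iff_add_eq_0)
  qed
  also have "\<dots> = - (B a b c d - B a 0 c d)"
  proof -
    have "integral0 b (\<lambda>t. pd_u2 B a t c d) = B a b c d - B a 0 c d"
    proof (rule integral0_fundamental[OF in_ball(1)])
      fix t :: complex assume "t \<in> ball 0 r"
      then show "((\<lambda>t. B a t c d) has_field_derivative pd_u2 B a t c d) (at t within ball 0 r)"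
        unfolding pd_u2_def
        by (intro has_field_derivative_at_within[OF field_differentiable_derivI]
            hol4_field_differentiable(2)[OF hB in_ball(2)])
    qed
    then show ?thesis
      using integral0_cmult[of b "-1" "\<lambda>t. pd_u2 B a t c d"] by simp
  qed
  finally show ?thesis
    using DERIV_imp_deriv[OF fibre_primitive_partials(1)[OF hA hB p]] by (simp add: pd_u1_def)
qed


lemma has_field_derivative_along_u2:
  assumes p: "(a, t, c, d) \<in> polydisc r"
  shows "((\<lambda>t. P a t c d * B a t c d - Q a t c d * A a t c d) has_field_derivative
           R c d * pd_x A a t c d) (at t)"
proof -
  have dPQ: "((\<lambda>v. P a v c d) has_field_derivative pd_u2 P a t c d) (at t)"
      "((\<lambda>v. Q a v c d) has_field_derivative pd_u2 Q a t c d) (at t)"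
    using area[rule_format, OF p] unfolding fibre_area_preserving_at_def pd_u2_def
    by (auto intro: field_differentiable_derivI)
  have dAB: "((\<lambda>v. A a v c d) has_field_derivative pd_u2 A a t c d) (at t)"
      "((\<lambda>v. B a v c d) has_field_derivative pd_u2 B a t c d) (at t)"
    unfolding pd_u2_def using hol4_field_differentiable(2)[OF hA p] hol4_field_differentiable(2)[OF hB p]
    by (auto intro: field_differentiable_derivI)
  have eq: "pd_u2 P a t c d * B a t c d + pd_u2 B a t c d * P a t c d
      - (pd_u2 Q a t c d * A a t c d + pd_u2 A a t c d * Q a t c d) = R c d * pd_x A a t c d"
    using area[rule_format, OF p] symm[rule_format, OF p]
    unfolding fibre_area_preserving_at_def sympl_symm_at_def vf_apply_def prod.case
    by (elim conjE) algebra
  show ?thesis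
    by (rule DERIV_cong[OF DERIV_diff[OF DERIV_mult[OF dPQ(1) dAB(2)] DERIV_mult[OF dPQ(2) dAB(1)]] eq])
qed

lemma has_field_derivative_along_u1_axis:
  assumes p: "(s, 0, c, d) \<in> polydisc r"
  shows "((\<lambda>s. P s 0 c d * B s 0 c d) has_field_derivative - (R c d * pd_x B s 0 c d)) (at s)"
proof -
  have dP: "((\<lambda>v. P v 0 c d) has_field_derivative pd_u1 P s 0 c d) (at s)"
    using area[rule_format, OF p] unfolding fibre_area_preserving_at_def pd_u1_def
    by (auto intro: field_differentiable_derivI)
  have dB: "((\<lambda>v. B v 0 c d) has_field_derivative pd_u1 B s 0 c d) (at s)"
    unfolding pd_u1_def using hol4_field_differentiable(1)[OF hB p] by (rule field_differentiable_derivI)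
  have "pd_u1 Q s 0 c d = 0"
    by (simp add: pd_u1_def Q_axis)
  then have eq: "pd_u1 P s 0 c d * B s 0 c d + pd_u1 B s 0 c d * P s 0 c d = - (R c d * pd_x B s 0 c d)"
    using area[rule_format, OF p] symm[rule_format, OF p] Q_axis[of s c d]
    unfolding fibre_area_preserving_at_def sympl_symm_at_def vf_apply_def prod.case
    by (elim conjE) algebra
  show ?thesis
    by (rule DERIV_cong[OF DERIV_mult[OF dP dB] eq])
qed

lemma first_integral_fibre_primitive:
  assumes p: "(a, b, c, d) \<in> polydisc r"
  shows "vf_apply P Q (\<lambda>_ _. R) (fibre_primitive A B) a b c d = 0"
proof -
  define \<phi> where "\<phi> t = P a t c d * B a t c d - Q a t c d * A a t c d" for t
  define \<psi> where "\<psi> s = P s 0 c d * B s 0 c d" for s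
  have "0 \<in> ball (0::complex) r" using p by (auto intro: le_less_trans[OF norm_ge_zero])
  then have segments: "closed_segment 0 b \<subseteq> ball 0 r" "closed_segment 0 a \<subseteq> ball 0 r"
    and slices: "\<And>t. t \<in> ball 0 r \<Longrightarrow> (a, t, c, d) \<in> polydisc r" "\<And>s. s \<in> ball 0 r \<Longrightarrow> (s, 0, c, d) \<in> polydisc r"
    using p closed_segment_subset[of 0 "ball 0 r" b] closed_segment_subset[of 0 "ball 0 r" a] by auto
  have "R c d * integral0 b (\<lambda>t. pd_x A a t c d) = integral0 b (\<lambda>t. R c d * pd_x A a t c d)"
    by (simp add: integral0_cmult)
  also have "\<dots> = \<phi> b - \<phi> 0"
    unfolding \<phi>_def
    by (rule integral0_fundamental[OF segments(1)
          has_field_derivative_at_within[OF has_field_derivative_along_u2[OF slices(1)]]])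
  finally have I1: "R c d * integral0 b (\<lambda>t. pd_x A a t c d) = \<phi> b - \<phi> 0" .
  have "R c d * integral0 a (\<lambda>s. pd_x B s 0 c d) = - integral0 a (\<lambda>s. - (R c d * pd_x B s 0 c d))"
    using integral0_cmult[of a "- R c d" "\<lambda>s. pd_x B s 0 c d"] by simp
  also have "integral0 a (\<lambda>s. - (R c d * pd_x B s 0 c d)) = \<psi> a - \<psi> 0"
    unfolding \<psi>_def
    by (rule integral0_fundamental[OF segments(2)
          has_field_derivative_at_within[OF has_field_derivative_along_u1_axis[OF slices(2)]]])
  finally have I2: "R c d * integral0 a (\<lambda>s. pd_x B s 0 c d) = \<psi> 0 - \<psi> a" by simp
  have "pd_x (fibre_primitive A B) a b c d
      = integral0 b (\<lambda>t. pd_x A a t c d) - integral0 a (\<lambda>s. pd_x B s 0 c d)"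
    unfolding pd_x_def[of "fibre_primitive A B"]
    by (rule DERIV_imp_deriv[OF fibre_primitive_partials(3)[OF hA hB p]])
  moreover have "\<psi> 0 = 0" "\<phi> 0 = \<psi> a"
    unfolding \<phi>_def \<psi>_def by (simp_all add: P_origin Q_axis)
  ultimately have "R c d * pd_x (fibre_primitive A B) a b c d = \<phi> b"
    using I1 I2 by (simp add: right_diff_distrib)
  then show ?thesis
    unfolding vf_apply_def pd_u1_fibre_primitive[OF p] pd_u2_fibre_primitive[OF hA hB p] \<phi>_def
    by (simp add: algebra_simps)
qed

end

definition Z_domain :: "(complex \<times> complex) set \<Rightarrow> pt4 set" where
  "Z_domain S = {(a, b, c, d). (a * b, d) \<in> S}"

lemma open_Z_domain:
  assumes "open S" shows "open (Z_domain S)"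
proof -
  have "Z_domain S = (\<lambda>p. (fst p * fst (snd p), snd (snd (snd p)))) -` S"
    by (auto simp: Z_domain_def)
  then show ?thesis
    using assms by (simp add: continuous_open_vimage continuous_intros)
qed

lemma fibre_area_preserving_on_Z_domain:
  "hol2 S \<chi>0 \<Longrightarrow> hol2 S \<chi>1 \<Longrightarrow> p \<in> Z_domain S \<Longrightarrow> fibre_area_preserving_at (Z_u1 \<chi>0 \<chi>1) (Z_u2 \<chi>0 \<chi>1) p"
  by (cases p) (auto simp: Z_domain_def intro: fibre_area_preserving_at_Z)

lemma hamiltonian_of_vert_sympl_symm:
  assumes \<chi>: "hol2 S \<chi>0" "hol2 S \<chi>1" "(0, 0) \<in> S"
    and hAB: "hol4 U A" "hol4 U B" "(0, 0, 0, 0) \<in> U"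
    and V: "open V" "(0, 0, 0, 0) \<in> V" "\<forall>p \<in> V. vert_sympl_symm_at \<chi>0 \<chi>1 A B C p"
  shows "\<exists>W f. open W \<and> (0, 0, 0, 0) \<in> W \<and> hol4 W f \<and>
     (\<forall>(a, b, c, d) \<in> W.
        A a b c d = pd_u2 f a b c d \<and> B a b c d = - pd_u1 f a b c d \<and> C a b c d = 0 \<and>
        vf_apply (Z_u1 \<chi>0 \<chi>1) (Z_u2 \<chi>0 \<chi>1) Z_x f a b c d = 0)"
proof -
  obtain r where r: "r > 0" "polydisc r \<subseteq> V \<inter> U \<inter> Z_domain S"
    using open_contains_polydisc[of "V \<inter> U \<inter> Z_domain S"] V(1,2) hAB(3) \<chi>(3)
      open_Z_domain[OF hol2_imp_open[OF \<chi>(1)]] hol4_imp_open[OF hAB(1)]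
    by (auto simp: Z_domain_def)
  then have hol: "hol4 (polydisc r) A" "hol4 (polydisc r) B"
    using hol4_subset[OF _ open_polydisc] hAB(1,2) by blast+
  have symm: "\<forall>p\<in>polydisc r. sympl_symm_at (Z_u1 \<chi>0 \<chi>1) (Z_u2 \<chi>0 \<chi>1) (\<lambda>_ _ x e. x * (x - e)) A B C p"
    using V(3) r(2) unfolding vert_sympl_symm_at_eq Z_x_eq by blast
  have area: "\<forall>p\<in>polydisc r. fibre_area_preserving_at (Z_u1 \<chi>0 \<chi>1) (Z_u2 \<chi>0 \<chi>1) p"
    using r(2) fibre_area_preserving_on_Z_domain[OF \<chi>(1,2)] by blast
  have axes: "Z_u2 \<chi>0 \<chi>1 a 0 c d = 0" "Z_u1 \<chi>0 \<chi>1 0 0 c d = 0" for a c d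
    by (simp_all add: Z_u1_def Z_u2_def)
  note facts = hol symm area axes
  have "A a b c d = pd_u2 (fibre_primitive A B) a b c d \<and> B a b c d = - pd_u1 (fibre_primitive A B) a b c d \<and>
      C a b c d = 0 \<and> vf_apply (Z_u1 \<chi>0 \<chi>1) (Z_u2 \<chi>0 \<chi>1) Z_x (fibre_primitive A B) a b c d = 0"
    if p: "(a, b, c, d) \<in> polydisc r" for a b c d
  proof -
    have "C a b c d = 0"
      using bspec[OF symm p] by (simp add: sympl_symm_at_def)
    then show ?thesis
      unfolding Z_x_eq using pd_u2_fibre_primitive[OF hol p] pd_u1_fibre_primitive[OF facts p]
        first_integral_fibre_primitive[OF facts p] by simp
  qed
  then have "\<forall>(a, b, c, d) \<in> polydisc r.
      A a b c d = pd_u2 (fibre_primitive A B) a b c d \<and> B a b c d = - pd_u1 (fibre_primitive A B) a b c d \<and>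
      C a b c d = 0 \<and> vf_apply (Z_u1 \<chi>0 \<chi>1) (Z_u2 \<chi>0 \<chi>1) Z_x (fibre_primitive A B) a b c d = 0"
    by blast
  moreover have "(0, 0, 0, 0) \<in> polydisc r"
    using r(1) by simp
  ultimately show ?thesis
    using open_polydisc hol4_fibre_primitive[OF hol] by blast
qed

lemma vert_sympl_symm_of_hamiltonian:
  assumes \<chi>: "hol2 S \<chi>0" "hol2 S \<chi>1" "(0, 0) \<in> S"
    and W: "open W" "(0, 0, 0, 0) \<in> W" "hol4 W f"
    and ham: "\<forall>(a, b, c, d) \<in> W.
        A a b c d = pd_u2 f a b c d \<and> B a b c d = - pd_u1 f a b c d \<and> C a b c d = 0 \<and>
        vf_apply (Z_u1 \<chi>0 \<chi>1) (Z_u2 \<chi>0 \<chi>1) Z_x f a b c d = 0"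
  shows "\<exists>V. open V \<and> (0, 0, 0, 0) \<in> V \<and> (\<forall>p \<in> V. vert_sympl_symm_at \<chi>0 \<chi>1 A B C p)"
proof -
  have "vert_sympl_symm_at \<chi>0 \<chi>1 A B C p" if "p \<in> W \<inter> Z_domain S" for p
  proof (cases p)
    case (fields a b c d)
    then show ?thesis
      using that ham fibre_area_preserving_on_Z_domain[OF \<chi>(1,2), of p] sympl_symm_at_hamiltonian[OF W(3)]
      unfolding vert_sympl_symm_at_eq Z_x_eq by blast
  qed
  moreover have "open (W \<inter> Z_domain S)" "(0, 0, 0, 0) \<in> W \<inter> Z_domain S"
    using W(1,2) \<chi>(3) open_Z_domain[OF hol2_imp_open[OF \<chi>(1)]] by (auto simp: Z_domain_def)
  ultimately show ?thesis
    by blast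
qed

theorem mainTheorem10:
  fixes \<chi>0 \<chi>1 :: "complex \<Rightarrow> complex \<Rightarrow> complex"
    and A B C :: fun4
    and S :: "(complex \<times> complex) set" and U :: "pt4 set"
  assumes chi_hol: "hol2 S \<chi>0" "hol2 S \<chi>1" "(0, 0) \<in> S"
    and chi_nz: "chi \<chi>0 \<chi>1 0 0 0 \<noteq> 0"
    and xi_hol: "hol4 U A" "hol4 U B" "hol4 U C" "(0, 0, 0, 0) \<in> U"
  shows "(\<exists>V. open V \<and> (0, 0, 0, 0) \<in> V \<and> (\<forall>p \<in> V. vert_sympl_symm_at \<chi>0 \<chi>1 A B C p))
     \<longleftrightarrow>
     (\<exists>W f. open W \<and> (0, 0, 0, 0) \<in> W \<and> hol4 W f \<and>
        (\<forall>(a, b, c, d) \<in> W.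
           A a b c d = pd_u2 f a b c d \<and> B a b c d = - pd_u1 f a b c d \<and> C a b c d = 0 \<and>
           vf_apply (Z_u1 \<chi>0 \<chi>1) (Z_u2 \<chi>0 \<chi>1) Z_x f a b c d = 0))"
proof (rule iffI, goal_cases)
  case 1
  then show ?case
    by (elim exE conjE) (rule hamiltonian_of_vert_sympl_symm[OF chi_hol xi_hol(1,2,4)])
next
  case 2
  then show ?case
    by (elim exE conjE) (rule vert_sympl_symm_of_hamiltonian[OF chi_hol])
qed

end
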